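(* Let $\varphi$ be a profile over a finite set $N$ that is qualifying consecutive (QC) with respect to a linear order $\rhd$ of $N$. Then the individuals in $f^{\mathrm{CSR}}(\varphi,N)$ are consecutive in $\rhd$ (i.e., $f^{\mathrm{CSR}}(\varphi,N)$ is an interval of $\rhd$, possibly empty).
   Context: A profile over a finite set $N$ of individuals is a map $\varphi:N\times N\to\{0,1\}$; $\varphi(a,a')=1$ means $a$ qualifies $a'$. For a linear order $\rhd=(a_1,\dots,a_n)$ of $N$, $\varphi$ is QC with respect to $\rhd$ if for every $a\in N$ the set $\{a_x:\varphi(a,a_x)=1\}$ is a set of consecutive elements of $\rhd$ (all 1s in the vector $(\varphi(a,a_1),\dots,\varphi(a,a_n))$ are consecutive). Consensus-start-respecting rule: for $T\subseteq N$, let $K_0(\varphi,T)=\{a\in T:\varphi(a',a)=1\text{ for all }a'\in T\}$ and for $\ell\ge1$, $K_\ell(\varphi,T)=K_{\ell-1}(\varphi,T)\cup\{a\in T:\exists a'\in K_{\ell-1}(\varphi,T),\ \varphi(a',a)=1\}$; $f^{\mathrm{CSR}}(\varphi,T)$ is the limit (stable value) of this sequence. *)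

theory Defs
  imports Main
begin

(* A profile over N: phi a a' = True means a qualifies a'.
   A linear order of N is represented as a list ord enumerating N without repetition:
   ord = [a_1, ..., a_n]. *)

definition linear_order_of :: "'a list \<Rightarrow> 'a set \<Rightarrow> bool" where
  "linear_order_of ord N \<longleftrightarrow> distinct ord \<and> set ord = N"

definition consecutive_in :: "'a list \<Rightarrow> 'a set \<Rightarrow> bool" where
  "consecutive_in ord S \<longleftrightarrow>
     (\<forall>i j k. i \<le> j \<longrightarrow> j \<le> k \<longrightarrow> k < length ord \<longrightarrow>
        ord ! i \<in> S \<longrightarrow> ord ! k \<in> S \<longrightarrow> ord ! j \<in> S)"

definition QC :: "('a \<Rightarrow> 'a \<Rightarrow> bool) \<Rightarrow> 'a set \<Rightarrow> 'a list \<Rightarrow> bool" where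
  "QC phi N ord \<longleftrightarrow> (\<forall>a\<in>N. consecutive_in ord {x. phi a x})"

fun K :: "('a \<Rightarrow> 'a \<Rightarrow> bool) \<Rightarrow> 'a set \<Rightarrow> nat \<Rightarrow> 'a set" where
  "K phi T 0 = {a\<in>T. \<forall>a'\<in>T. phi a' a}"
| "K phi T (Suc l) = K phi T l \<union> {a\<in>T. \<exists>a'\<in>K phi T l. phi a' a}"

definition f_CSR :: "('a \<Rightarrow> 'a \<Rightarrow> bool) \<Rightarrow> 'a set \<Rightarrow> 'a set" where
  "f_CSR phi T = (\<Union>l. K phi T l)"

end

theory Submission
  imports Defs
begin

text \<open>If the outcome is nonempty, some consensus individual c exists: everyone qualifies c.
  Each member x of the outcome is qualified by a member a' of the outcome, and a' also
  qualifies c; by QC, a' qualifies everyone between x and c, who therefore joins the outcome.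
  So the outcome is star-shaped around the position of c in the order, hence an interval.\<close>

lemma K_subset: "K phi T l \<subseteq> T"
  by (induction l) auto

lemma f_CSR_subset: "f_CSR phi T \<subseteq> T"
  unfolding f_CSR_def by (rule UN_least) (rule K_subset)

lemma K_subset_f_CSR: "K phi T l \<subseteq> f_CSR phi T"
  unfolding f_CSR_def by (rule UN_upper) (rule UNIV_I)

lemma f_CSR_closed:
  assumes "a \<in> f_CSR phi T" and "x \<in> T" and "phi a x"
  shows "x \<in> f_CSR phi T"
proof -
  from assms(1) obtain l where "a \<in> K phi T l" unfolding f_CSR_def by blast
  with assms(2,3) have "x \<in> K phi T (Suc l)" by auto
  then show ?thesis unfolding f_CSR_def by blast
qed

lemma f_CSR_empty_if_K_0_empty:
  assumes "K phi T 0 = {}"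
  shows "f_CSR phi T = {}"
proof -
  have "K phi T l = {}" for l by (induction l) (use assms in auto)
  then show ?thesis unfolding f_CSR_def by blast
qed

lemma f_CSR_qualified_by_member:
  assumes "x \<in> f_CSR phi T"
  shows "\<exists>a\<in>f_CSR phi T. phi a x"
proof -
  from assms obtain l where "x \<in> K phi T l" unfolding f_CSR_def by blast
  then show ?thesis
  proof (induction l arbitrary: x)
    case 0
    then have "phi x x" by simp
    moreover have "x \<in> f_CSR phi T" using K_subset_f_CSR 0 by (rule subsetD)
    ultimately show ?case by (rule bexI)
  next
    case (Suc l)
    from Suc.prems consider "x \<in> K phi T l" | a where "a \<in> K phi T l" "phi a x" by auto
    then show ?case
    proof cases
      case 1
      then show ?thesis by (rule Suc.IH)
    next
      case 2
      have "a \<in> f_CSR phi T" using K_subset_f_CSR 2(1) by (rule subsetD)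
      with 2(2) show ?thesis by (rule bexI)
    qed
  qed
qed

lemma consecutive_in_between:
  assumes "consecutive_in ord S" and "p < length ord" and "m < length ord"
    and "ord ! p \<in> S" and "ord ! m \<in> S" and "min p m \<le> q" and "q \<le> max p m"
  shows "ord ! q \<in> S"
  using assms unfolding consecutive_in_def
  by (cases "p \<le> m") (auto simp: min_def max_def)

lemma consecutive_in_if_star_shaped:
  assumes "m < length ord"
    and star: "\<And>p q. p < length ord \<Longrightarrow> ord ! p \<in> S \<Longrightarrow> min p m \<le> q \<Longrightarrow> q \<le> max p m
      \<Longrightarrow> ord ! q \<in> S"
  shows "consecutive_in ord S"
  unfolding consecutive_in_def
proof (intro allI impI)
  fix i j k
  assume ij: "i \<le> j" and jk: "j \<le> k" and k: "k < length ord"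
    and i_in: "ord ! i \<in> S" and k_in: "ord ! k \<in> S"
  show "ord ! j \<in> S"
  proof (cases "j \<le> m")
    case True
    have "i < length ord" using ij jk k by simp
    moreover note i_in
    moreover have "min i m \<le> j" "j \<le> max i m" using ij True by simp_all
    ultimately show ?thesis by (rule star)
  next
    case False
    have "min k m \<le> j" "j \<le> max k m" using jk False by simp_all
    with k k_in show ?thesis by (rule star)
  qed
qed

lemma f_CSR_star_shaped:
  assumes "set ord \<subseteq> T" and QC: "QC phi T ord"
    and "c \<in> K phi T 0" and "m < length ord" and "ord ! m = c"
    and "p < length ord" and "ord ! p \<in> f_CSR phi T"
    and "min p m \<le> q" and "q \<le> max p m"
  shows "ord ! q \<in> f_CSR phi T"
proof -
  from f_CSR_qualified_by_member[OF assms(7)]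
  obtain a where a: "a \<in> f_CSR phi T" "phi a (ord ! p)" by (rule bexE)
  have "a \<in> T" using f_CSR_subset a(1) by (rule subsetD)
  then have cons: "consecutive_in ord {x. phi a x}" using QC unfolding QC_def by blast
  have "phi a (ord ! m)" using assms(3,5) \<open>a \<in> T\<close> by simp
  with a(2) have "ord ! q \<in> {x. phi a x}"
    by (intro consecutive_in_between[OF cons assms(6,4) _ _ assms(8,9)]) simp_all
  then have "phi a (ord ! q)" by simp
  moreover have "q < length ord" using assms(4,6,9) by simp
  then have "ord ! q \<in> T" using assms(1) nth_mem by blast
  ultimately show ?thesis by (rule f_CSR_closed[OF a(1), rotated])
qed

theorem lemma2:
  fixes phi :: "'a \<Rightarrow> 'a \<Rightarrow> bool" and N :: "'a set" and ord :: "'a list"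
  assumes "finite N"
    and "linear_order_of ord N"
    and "QC phi N ord"
  shows "consecutive_in ord (f_CSR phi N)"
proof (cases "K phi N 0 = {}")
  case True
  then have "f_CSR phi N = {}" by (rule f_CSR_empty_if_K_0_empty)
  then show ?thesis unfolding consecutive_in_def by simp
next
  case False
  then obtain c where c: "c \<in> K phi N 0" by auto
  have set_ord: "set ord = N" using assms(2) unfolding linear_order_of_def by simp
  with c have "c \<in> set ord" by simp
  then obtain m where m: "m < length ord" "ord ! m = c" by (auto simp: in_set_conv_nth)
  show ?thesis
  proof (rule consecutive_in_if_star_shaped[OF m(1)])
    fix p q
    assume "p < length ord" "ord ! p \<in> f_CSR phi N" "min p m \<le> q" "q \<le> max p m"
    then show "ord ! q \<in> f_CSR phi N"
      by (rule f_CSR_star_shaped[OF equalityD1[OF set_ord] assms(3) c m])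
  qed
qed

end
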